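(* There exist real numbers $\delta,\varepsilon$ with $0<\delta<\varepsilon<1/2$ and an integer $n>1$ such that $P_{\varepsilon,\delta}$ is a quantum system and $\mathrm{NDP}_n(P_{\varepsilon,\delta})$ is a non-locality-distillation protocol, i.e. $NL[P_{\varepsilon,\delta}^n]>NL[P_{\varepsilon,\delta}]>2$.
   Context: A binary-input/binary-output bipartite system is a conditional probability distribution $P(ab|xy)$ with $a,b,x,y\in\{0,1\}$ ($x,a$ Alice's input/output, $y,b$ Bob's). Correlation functions: $X_{xy}(P)=P(00|xy)+P(11|xy)-P(01|xy)-P(10|xy)$. CHSH non-locality: $NL[P]=\max_{x,y\in\{0,1\}}|X_{xy}(P)+X_{x\bar y}(P)+X_{\bar x y}(P)-X_{\bar x\bar y}(P)|$, with $\bar0=1,\bar1=0$. A system $P$ is a quantum system if there exist Hilbert spaces $H_A,H_B$, a density operator $\rho$ on $H_A\otimes H_B$, and for each $x\in\{0,1\}$ a two-outcome POVM $\{E^x_a\}_{a\in\{0,1\}}$ on $H_A$ and for each $y$ a two-outcome POVM $\{F^y_b\}_{b\in\{0,1\}}$ on $H_B$ with $P(ab|xy)=\mathrm{tr}(\rho\,(E^x_a\otimes F^y_b))$ for all $a,b,x,y$. Protocol $\mathrm{NDP}_n(P)$: on inputs $x,y$ the parties feed $x$ and $y$ into each of $n$ independent copies of $P$, obtaining $(a_i,b_i)\sim P(a_ib_i|xy)$ independently for $i=1,\dots,n$, and output $a=a_1\oplus\cdots\oplus a_n$, $b=b_1\oplus\cdots\oplus b_n$; the induced distribution of $(a,b)$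 given $(x,y)$ is $P^n$. A non-locality-distillation protocol is one for which $NL[P^n]>NL[P]>2$. For $0\le\varepsilon,\delta\le 1$, $P_{\varepsilon,\delta}$ is the system with $P_{\varepsilon,\delta}(00|xy)=P_{\varepsilon,\delta}(11|xy)=(1-\delta)/2$, $P_{\varepsilon,\delta}(01|xy)=P_{\varepsilon,\delta}(10|xy)=\delta/2$ for $xy\in\{00,01,10\}$, and $P_{\varepsilon,\delta}(00|11)=P_{\varepsilon,\delta}(11|11)=(1-\varepsilon)/2$, $P_{\varepsilon,\delta}(01|11)=P_{\varepsilon,\delta}(10|11)=\varepsilon/2$. *)

theory Defs
  imports Complex_Main "Jordan_Normal_Form.Matrix" "Jordan_Normal_Form.Conjugate"
begin

text \<open>A binary-input/binary-output bipartite system: P a b x y = P(ab|xy), with a,b,x,y in {0,1}.\<close>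
type_synonym system = "nat \<Rightarrow> nat \<Rightarrow> nat \<Rightarrow> nat \<Rightarrow> real"

definition corr :: "system \<Rightarrow> nat \<Rightarrow> nat \<Rightarrow> real" where
  "corr P x y = P 0 0 x y + P 1 1 x y - P 0 1 x y - P 1 0 x y"

definition bnot :: "nat \<Rightarrow> nat" where
  "bnot x = 1 - x"

definition NL :: "system \<Rightarrow> real" where
  "NL P = Max {\<bar>corr P x y + corr P x (bnot y) + corr P (bnot x) y - corr P (bnot x) (bnot y)\<bar>
               | x y. x \<in> {0,1} \<and> y \<in> {0,1}}"

text \<open>The protocol NDP_n: n independent copies fed with the same inputs, outputs XOR-ed.\<close>
definition NDP :: "nat \<Rightarrow> system \<Rightarrow> system" where
  "NDP n P a b x y =
     (\<Sum>as\<in>{as. length as = n \<and> set as \<subseteq> {0,1}}.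
        \<Sum>bs\<in>{bs. length bs = n \<and> set bs \<subseteq> {0,1}}.
          if sum_list as mod 2 = a \<and> sum_list bs mod 2 = b
          then (\<Prod>i<n. P (as ! i) (bs ! i) x y) else 0)"

definition Peps :: "real \<Rightarrow> real \<Rightarrow> system" where
  "Peps \<epsilon> \<delta> a b x y =
     (if x = 1 \<and> y = 1 then (if a = b then (1 - \<epsilon>) / 2 else \<epsilon> / 2)
      else (if a = b then (1 - \<delta>) / 2 else \<delta> / 2))"

definition mtrace :: "complex mat \<Rightarrow> complex" where
  "mtrace A = (\<Sum>i<dim_row A. A $$ (i, i))"

definition psd :: "nat \<Rightarrow> complex mat \<Rightarrow> bool" where
  "psd d A \<longleftrightarrow> A \<in> carrier_mat d d \<and>
     (\<forall>v\<in>carrier_vec d. Im (conjugate v \<bullet> (A *\<^sub>v v)) = 0 \<and> Re (conjugate v \<bullet> (A *\<^sub>v v)) \<ge> 0)"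

definition density :: "nat \<Rightarrow> complex mat \<Rightarrow> bool" where
  "density d \<rho> \<longleftrightarrow> psd d \<rho> \<and> mtrace \<rho> = 1"

definition povm2 :: "nat \<Rightarrow> (nat \<Rightarrow> complex mat) \<Rightarrow> bool" where
  "povm2 d E \<longleftrightarrow> psd d (E 0) \<and> psd d (E 1) \<and> E 0 + E 1 = 1\<^sub>m d"

definition kron :: "complex mat \<Rightarrow> complex mat \<Rightarrow> complex mat" where
  "kron A B = mat (dim_row A * dim_row B) (dim_col A * dim_col B)
     (\<lambda>(i, j). A $$ (i div dim_row B, j div dim_col B) * B $$ (i mod dim_row B, j mod dim_col B))"

definition quantum_system :: "system \<Rightarrow> bool" where
  "quantum_system P \<longleftrightarrow>
     (\<exists>dA dB \<rho> E F. 0 < dA \<and> 0 < dB \<and> density (dA * dB) \<rho> \<and>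
        (\<forall>x\<in>{0,1}. povm2 dA (E x)) \<and> (\<forall>y\<in>{0,1}. povm2 dB (F y)) \<and>
        (\<forall>a\<in>{0,1}. \<forall>b\<in>{0,1}. \<forall>x\<in>{0,1}. \<forall>y\<in>{0,1}.
           complex_of_real (P a b x y) = mtrace (\<rho> * kron (E x a) (F y b))))"

end

theory Submission
  imports Defs
begin

(* Proof idea.  Write c = 1 - 2\<delta> and e = 1 - 2\<epsilon> for the correlators of P_{\<epsilon>,\<delta>}.

   (1) XOR-ing the outputs of n independent copies multiplies the correlators:
       corr (NDP n P) = (corr P)^n  (the \<plusminus>1-valued parities of independent copies multiply).
   (2) For any system whose correlators are c except at inputs (1,1), where it is e,
       NL = max |3c - e| |c + e|.  With (1) this computes NL of P_{\<epsilon>,\<delta>} and of its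
       distilled version NDP n P_{\<epsilon>,\<delta>}, which has correlators c^n, e^n.
   (3) Measuring the maximally entangled two-qubit state (|00> + |11>)/\<surd>2 with the
       projective measurements along unit vectors u_x (Alice) and v_y (Bob) of the
       real Bloch circle yields P(ab|xy) = (1 + (-1)^(a+b) <u_x, v_y>)/4.
   Choosing Bob's vectors at angles \<plusminus>\<theta> and Alice's at 0 and 2\<theta>, with cos \<theta> = 12/13,
   gives c = cos \<theta> = 12/13 and e = cos 3\<theta> = 828/2197, i.e. \<delta> = 1/26, \<epsilon> = 1369/4394.
   Then NL[P] = 5256/2197 > 2 and two copies (n = 2) already increase NL. *)


lemma sum_over_word_pairs:
  fixes w :: "'a \<Rightarrow> 'a \<Rightarrow> 'b::comm_semiring_1"
  shows "(\<Sum>as\<in>{as. length as = n \<and> set as \<subseteq> A}. \<Sum>bs\<in>{bs. length bs = n \<and> set bs \<subseteq> A}.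
            \<Prod>i<n. w (as ! i) (bs ! i)) = (\<Sum>a\<in>A. \<Sum>b\<in>A. w a b) ^ n"
proof (induction n)
  case 0
  have "{as. length as = 0 \<and> set as \<subseteq> A} = {[]}" by auto
  then show ?case by simp
next
  case (Suc n)
  let ?L = "{as. length as = n \<and> set as \<subseteq> A}"
  have words_Suc: "{as. length as = Suc n \<and> set as \<subseteq> A} = (\<lambda>(a, as). a # as) ` (A \<times> ?L)"
    by (auto simp: length_Suc_conv image_iff)
  have inj: "inj_on (\<lambda>(a, as). a # as) (A \<times> ?L)" by (auto simp: inj_on_def)
  have "(\<Sum>as\<in>{as. length as = Suc n \<and> set as \<subseteq> A}. \<Sum>bs\<in>{bs. length bs = Suc n \<and> set bs \<subseteq> A}.
            \<Prod>i<Suc n. w (as ! i) (bs ! i))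
      = (\<Sum>(a, as)\<in>A \<times> ?L. \<Sum>(b, bs)\<in>A \<times> ?L. w a b * (\<Prod>i<n. w (as ! i) (bs ! i)))"
    unfolding words_Suc sum.reindex[OF inj]
    by (simp add: prod.lessThan_Suc_shift case_prod_beta del: prod.lessThan_Suc)
  also have "\<dots> = (\<Sum>a\<in>A. \<Sum>as\<in>?L. \<Sum>b\<in>A. \<Sum>bs\<in>?L. w a b * (\<Prod>i<n. w (as ! i) (bs ! i)))"
    by (simp add: sum.cartesian_product[symmetric])
  also have "\<dots> = (\<Sum>a\<in>A. \<Sum>b\<in>A. w a b * (\<Sum>as\<in>?L. \<Sum>bs\<in>?L. \<Prod>i<n. w (as ! i) (bs ! i)))"
    by (simp only: sum_distrib_left sum.swap[of _ ?L A])
  also have "\<dots> = (\<Sum>a\<in>A. \<Sum>b\<in>A. w a b) * (\<Sum>as\<in>?L. \<Sum>bs\<in>?L. \<Prod>i<n. w (as ! i) (bs ! i))"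
    by (simp only: sum_distrib_right)
  finally show ?case using Suc.IH by simp
qed

lemma parity_correlator:
  "(if s mod 2 = 0 \<and> t mod 2 = 0 then v else 0) + (if s mod 2 = 1 \<and> t mod 2 = 1 then v else 0)
   - (if s mod 2 = 0 \<and> t mod 2 = 1 then v else 0) - (if s mod 2 = 1 \<and> t mod 2 = 0 then v else 0)
   = (-1) ^ s * (-1) ^ t * (v::real)"
  by (cases "even s"; cases "even t") (auto simp: minus_one_power_iff)

lemma corr_NDP: "corr (NDP n P) x y = corr P x y ^ n"
proof -
  let ?L = "{as::nat list. length as = n \<and> set as \<subseteq> {0,1}}"
  let ?w = "\<lambda>a b. (-1) ^ a * (-1) ^ b * P a b x y :: real"
  have "corr (NDP n P) x y
      = (\<Sum>as\<in>?L. \<Sum>bs\<in>?L. (-1) ^ sum_list as * (-1) ^ sum_list bs * (\<Prod>i<n. P (as ! i) (bs ! i) x y))"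
    unfolding corr_def NDP_def parity_correlator[symmetric]
    by (simp only: sum.distrib sum_subtractf)
  also have "\<dots> = (\<Sum>as\<in>?L. \<Sum>bs\<in>?L. \<Prod>i<n. ?w (as ! i) (bs ! i))"
    by (intro sum.cong refl) (simp add: sum_list_sum_nth atLeast0LessThan power_sum prod.distrib)
  also have "\<dots> = (\<Sum>a\<in>{0,1}. \<Sum>b\<in>{0,1}. ?w a b) ^ n"
    by (rule sum_over_word_pairs)
  also have "\<dots> = corr P x y ^ n"
    by (simp add: corr_def algebra_simps)
  finally show ?thesis .
qed


lemma bit_pairs_image:
  "{g x y | x y. x \<in> {0,1} \<and> y \<in> {0,1::nat}} = {g 0 0, g 0 1, g 1 0, g 1 1}"
  by blast

lemma NL_single_deviation:
  assumes "\<And>x y. corr P x y = (if x = 1 \<and> y = 1 then e else c)"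
  shows "NL P = max \<bar>3 * c - e\<bar> \<bar>c + e\<bar>"
proof -
  have "NL P = Max {\<bar>3 * c - e\<bar>, \<bar>c + e\<bar>, \<bar>c + e\<bar>, \<bar>c + e\<bar>}"
    unfolding NL_def bit_pairs_image by (simp add: assms bnot_def)
  then show ?thesis by simp
qed

lemma corr_Peps: "corr (Peps \<epsilon> \<delta>) x y = (if x = 1 \<and> y = 1 then 1 - 2 * \<epsilon> else 1 - 2 * \<delta>)"
  by (simp add: corr_def Peps_def field_simps)

lemma NL_Peps: "NL (Peps \<epsilon> \<delta>) = max \<bar>3 * (1 - 2 * \<delta>) - (1 - 2 * \<epsilon>)\<bar> \<bar>(1 - 2 * \<delta>) + (1 - 2 * \<epsilon>)\<bar>"
  by (rule NL_single_deviation) (simp add: corr_Peps)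

lemma NL_NDP_Peps:
  "NL (NDP n (Peps \<epsilon> \<delta>)) = max \<bar>3 * (1 - 2 * \<delta>) ^ n - (1 - 2 * \<epsilon>) ^ n\<bar> \<bar>(1 - 2 * \<delta>) ^ n + (1 - 2 * \<epsilon>) ^ n\<bar>"
  by (rule NL_single_deviation) (simp add: corr_NDP corr_Peps)


lemma quadratic_form_expand:
  assumes "A \<in> carrier_mat n n" "v \<in> carrier_vec n"
  shows "conjugate v \<bullet> (A *\<^sub>v v) = (\<Sum>i<n. cnj (v $ i) * (\<Sum>j<n. A $$ (i, j) * v $ j))"
  using assms by (auto simp: scalar_prod_def mult_mat_vec_def row_def lessThan_atLeast0 intro!: sum.cong)

definition sym2 :: "real \<Rightarrow> real \<Rightarrow> real \<Rightarrow> complex mat" where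
  "sym2 a b c = mat 2 2 (\<lambda>(i, j). complex_of_real (if i = 0 \<and> j = 0 then a else if i = 1 \<and> j = 1 then b else c))"

lemma sym2_carrier: "sym2 a b c \<in> carrier_mat 2 2"
  by (simp add: sym2_def)

lemma sym2_entries:
  "sym2 a b c $$ (0, 0) = a" "sym2 a b c $$ (1, 1) = b"
  "sym2 a b c $$ (0, 1) = c" "sym2 a b c $$ (1, 0) = c"
  by (simp_all add: sym2_def)

lemma sum_lessThan_2: "(\<Sum>i<2. f i) = f 0 + f (1::nat)"
  by (simp add: numeral_2_eq_2)

lemma sum_lessThan_4: "(\<Sum>i<4. f i) = f 0 + f 1 + f 2 + f (3::nat)"
  by (simp add: eval_nat_numeral)

lemma binary_form_nonneg:
  fixes a b c :: real
  assumes "a \<ge> 0" "b \<ge> 0" "c\<^sup>2 \<le> a * b"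
  shows "a * x * x + b * y * y + 2 * c * x * y \<ge> 0"
proof (cases "a = 0")
  case True
  then have "c\<^sup>2 \<le> 0" using assms by simp
  then have "c = 0" by simp
  then show ?thesis using True assms by (simp add: mult.assoc)
next
  case False
  then have "a > 0" using assms by simp
  have "a * (a * x * x + b * y * y + 2 * c * x * y) = (a * x + c * y)\<^sup>2 + (a * b - c\<^sup>2) * y * y"
    by (simp add: power2_eq_square algebra_simps)
  also have "\<dots> \<ge> 0" using assms by (simp add: mult.assoc)
  finally show ?thesis using \<open>a > 0\<close> by (simp add: zero_le_mult_iff)
qed

lemma psd_sym2:
  assumes "a \<ge> 0" "b \<ge> 0" "c\<^sup>2 \<le> a * b"
  shows "psd 2 (sym2 a b c)"
  unfolding psd_def
proof (intro conjI ballI sym2_carrier)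
  fix v :: "complex vec"
  assume v: "v \<in> carrier_vec 2"
  have form: "conjugate v \<bullet> (sym2 a b c *\<^sub>v v)
      = cnj (v $ 0) * (a * v $ 0 + c * v $ 1) + cnj (v $ 1) * (c * v $ 0 + b * v $ 1)"
    using sym2_entries[of a b c]
    by (simp add: quadratic_form_expand[OF sym2_carrier v] sum_lessThan_2)
  show "Im (conjugate v \<bullet> (sym2 a b c *\<^sub>v v)) = 0"
    unfolding form by (simp add: algebra_simps)
  have "Re (conjugate v \<bullet> (sym2 a b c *\<^sub>v v))
      = (a * Re (v $ 0) * Re (v $ 0) + b * Re (v $ 1) * Re (v $ 1) + 2 * c * Re (v $ 0) * Re (v $ 1))
      + (a * Im (v $ 0) * Im (v $ 0) + b * Im (v $ 1) * Im (v $ 1) + 2 * c * Im (v $ 0) * Im (v $ 1))"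
    unfolding form by (simp add: algebra_simps)
  then show "Re (conjugate v \<bullet> (sym2 a b c *\<^sub>v v)) \<ge> 0"
    using binary_form_nonneg[OF assms, of "Re (v $ 0)" "Re (v $ 1)"]
          binary_form_nonneg[OF assms, of "Im (v $ 0)" "Im (v $ 1)"] by linarith
qed

text \<open>The maximally entangled state (|00> + |11>)/\<surd>2 as a density matrix on C^2 \<otimes> C^2.\<close>
definition phi_plus :: "complex mat" where
  "phi_plus = mat 4 4 (\<lambda>(i, j). if (i = 0 \<or> i = 3) \<and> (j = 0 \<or> j = 3) then 1/2 else 0)"

lemma density_phi_plus: "density (2 * 2) phi_plus"
  unfolding density_def psd_def
proof (intro conjI ballI)
  show "phi_plus \<in> carrier_mat (2 * 2) (2 * 2)" by (simp add: phi_plus_def)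
  fix v :: "complex vec"
  assume "v \<in> carrier_vec (2 * 2)"
  then have v: "v \<in> carrier_vec 4" by simp
  have form: "conjugate v \<bullet> (phi_plus *\<^sub>v v) = (cnj (v $ 0) + cnj (v $ 3)) * (v $ 0 + v $ 3) / 2"
    using quadratic_form_expand[OF _ v, of phi_plus]
    by (simp add: phi_plus_def sum_lessThan_4 algebra_simps add_divide_distrib)
  show "Im (conjugate v \<bullet> (phi_plus *\<^sub>v v)) = 0"
    unfolding form by (simp add: algebra_simps)
  have "0 \<le> (Re (v $ 0) + Re (v $ 3))\<^sup>2 + (Im (v $ 0) + Im (v $ 3))\<^sup>2" by simp
  then show "Re (conjugate v \<bullet> (phi_plus *\<^sub>v v)) \<ge> 0"
    unfolding form by (simp add: algebra_simps power2_eq_square)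
next
  show "mtrace phi_plus = 1" by (simp add: mtrace_def phi_plus_def sum_lessThan_4)
qed

lemma trace_phi_plus_kron:
  assumes "A \<in> carrier_mat 2 2" "B \<in> carrier_mat 2 2"
  shows "mtrace (phi_plus * kron A B)
       = (A $$ (0, 0) * B $$ (0, 0) + A $$ (1, 1) * B $$ (1, 1) + A $$ (0, 1) * B $$ (0, 1) + A $$ (1, 0) * B $$ (1, 0)) / 2"
  using assms
  by (simp add: mtrace_def phi_plus_def kron_def times_mat_def scalar_prod_def sum_lessThan_4
      lessThan_atLeast0[symmetric] algebra_simps add_divide_distrib)

text \<open>The projector (I + s (z \<sigma>_z + x \<sigma>_x))/2 onto outcome s = \<plusminus>1 of the spin measurement
  along the real Bloch vector (z, x).\<close>
definition bloch_proj :: "real \<Rightarrow> real \<Rightarrow> real \<Rightarrow> complex mat" where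
  "bloch_proj s z x = sym2 ((1 + s * z) / 2) ((1 - s * z) / 2) (s * x / 2)"

lemma psd_bloch_proj:
  assumes "s = 1 \<or> s = -1" "z\<^sup>2 + x\<^sup>2 = 1"
  shows "psd 2 (bloch_proj s z x)"
  unfolding bloch_proj_def
proof (rule psd_sym2)
  have "z\<^sup>2 \<le> 1"
    using assms(2) zero_le_power2[of x] by linarith
  then have "\<bar>z\<bar> \<le> 1"
    by (simp add: abs_square_le_1)
  then show "0 \<le> (1 + s * z) / 2" "0 \<le> (1 - s * z) / 2" using assms(1) by auto
  show "(s * x / 2)\<^sup>2 \<le> (1 + s * z) / 2 * ((1 - s * z) / 2)"
    using assms by (auto simp: power2_eq_square field_simps)
qed

lemma povm_bloch:
  assumes "z\<^sup>2 + x\<^sup>2 = 1"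
  shows "povm2 2 (\<lambda>a. bloch_proj ((-1) ^ a) z x)"
proof -
  have "bloch_proj 1 z x + bloch_proj (-1) z x = 1\<^sub>m 2"
    by (rule eq_matI) (auto simp: bloch_proj_def sym2_def less_2_cases_iff add_divide_distrib[symmetric])
  then show ?thesis
    unfolding povm2_def using psd_bloch_proj[OF _ assms] by simp
qed

lemma trace_phi_plus_bloch:
  "mtrace (phi_plus * kron (bloch_proj s z x) (bloch_proj t z' x'))
     = complex_of_real ((1 + s * t * (z * z' + x * x')) / 4)"
  unfolding bloch_proj_def trace_phi_plus_kron[OF sym2_carrier sym2_carrier] sym2_entries
  by (simp add: field_simps)

lemma quantum_system_from_unit_vectors:
  fixes uz ux vz vx :: "nat \<Rightarrow> real"
  assumes unit_u: "\<And>x. uz x ^ 2 + ux x ^ 2 = 1"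
    and unit_v: "\<And>y. vz y ^ 2 + vx y ^ 2 = 1"
    and P: "\<And>a b x y. a \<in> {0,1} \<Longrightarrow> b \<in> {0,1} \<Longrightarrow> x \<in> {0,1} \<Longrightarrow> y \<in> {0,1} \<Longrightarrow>
              P a b x y = (1 + (-1) ^ a * (-1) ^ b * (uz x * vz y + ux x * vx y)) / 4"
  shows "quantum_system P"
  unfolding quantum_system_def
proof (intro exI conjI ballI)
  show "density (2 * 2) phi_plus" by (rule density_phi_plus)
  show "povm2 2 (\<lambda>a. bloch_proj ((-1) ^ a) (uz x) (ux x))" for x
    using povm_bloch unit_u by simp
  show "povm2 2 (\<lambda>b. bloch_proj ((-1) ^ b) (vz y) (vx y))" for y
    using povm_bloch unit_v by simp
  show "complex_of_real (P a b x y)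
        = mtrace (phi_plus * kron (bloch_proj ((-1) ^ a) (uz x) (ux x)) (bloch_proj ((-1) ^ b) (vz y) (vx y)))"
    if "a \<in> {0,1}" "b \<in> {0,1}" "x \<in> {0,1}" "y \<in> {0,1}" for a b x y
    unfolding trace_phi_plus_bloch P[OF that] ..
qed simp_all


text \<open>With cos \<theta> = 12/13, Alice measures at angles 0 and 2\<theta>, Bob at \<plusminus>\<theta>: three correlators are
  cos \<theta> = 12/13 = 1 - 2\<delta> and the fourth is cos 3\<theta> = 828/2197 = 1 - 2\<epsilon>.\<close>
lemma quantum_Peps: "quantum_system (Peps (1369/4394) (1/26))"
proof (rule quantum_system_from_unit_vectors)
  let ?uz = "\<lambda>x::nat. if x = 0 then 1 else 119/169 :: real"
  let ?ux = "\<lambda>x::nat. if x = 0 then 0 else 120/169 :: real"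
  let ?vz = "\<lambda>y::nat. 12/13 :: real"
  let ?vx = "\<lambda>y::nat. if y = 0 then 5/13 else -5/13 :: real"
  show "?uz x ^ 2 + ?ux x ^ 2 = 1" for x by (simp add: power2_eq_square)
  show "?vz y ^ 2 + ?vx y ^ 2 = 1" for y by (simp add: power2_eq_square)
  show "Peps (1369/4394) (1/26) a b x y = (1 + (-1) ^ a * (-1) ^ b * (?uz x * ?vz y + ?ux x * ?vx y)) / 4"
    if "a \<in> {0,1}" "b \<in> {0,1}" "x \<in> {0,1}" "y \<in> {0,1}" for a b x y
    using that unfolding Peps_def by (elim insertE emptyE) simp_all
qed

theorem theorem2:
  shows "\<exists>\<delta> \<epsilon> :: real. 0 < \<delta> \<and> \<delta> < \<epsilon> \<and> \<epsilon> < 1/2 \<and>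
    (\<exists>n::nat. n > 1 \<and> quantum_system (Peps \<epsilon> \<delta>) \<and>
       NL (NDP n (Peps \<epsilon> \<delta>)) > NL (Peps \<epsilon> \<delta>) \<and> NL (Peps \<epsilon> \<delta>) > 2)"
proof -
  let ?P = "Peps (1369/4394) (1/26)"
  have NL_P: "NL ?P = 5256/2197"
    by (simp add: NL_Peps)
  have nonlocal: "NL ?P > 2"
    unfolding NL_P by simp
  have distilled: "NL (NDP 2 ?P) > NL ?P"
    unfolding NL_P by (simp add: NL_NDP_Peps power2_eq_square)
  have parameters: "0 < (1/26::real)" "(1/26::real) < 1369/4394" "(1369/4394::real) < 1/2" "(1::nat) < 2"
    by simp_all
  show ?thesis
    using parameters quantum_Peps distilled nonlocal by blast
qed

end
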